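(* Let $\mathcal{C}$ be an amendable category (having the pullbacks and pushouts required for PBPO rules and steps). Then for any canonical PBPO rule $\rho$ there exists a monic PBPO rule $\sigma$ such that ${\Rightarrow^{\rightarrowtail}_\rho} = {\Rightarrow_\sigma}$. If $\mathcal{C}$ is moreover strongly amendable, then additionally ${\Rightarrow^{\rightarrowtail}_\rho} = {\Rightarrow^{\mathrm{SM}}_\sigma}$.
   Context: A PBPO rule consists of objects $L,K,R,L',K',R'$ and morphisms $l : K \to L$, $r : K \to R$, $t_L : L \to L'$, $t_K : K \to K'$, $t_R : R \to R'$, $l' : K' \to L'$, $r' : K' \to R'$ with $t_L \circ l = l' \circ t_K$ and $t_R \circ r = r' \circ t_K$. It is canonical if $L \xleftarrow{l} K \xrightarrow{t_K} K'$ is a pullback of $t_L, l'$ and $K' \xrightarrow{r'} R' \xleftarrow{t_R} R$ is a pushout of $t_K, r$; it is monic if it is canonical and $t_L$ is a monomorphism. A PBPO rewrite step $G_L \Rightarrow_\rho^{m,\alpha} G_R$ is given by $m : L \to G_L$, $\alpha : G_L \to L'$ with $t_L = \alpha \circ m$; a pullback $G_L \xleftarrow{g_L} G_K \xrightarrow{u'} K'$ of $\alpha$ and $l'$; the unique $u : K \to G_K$ with $g_L \circ u = m \circ l$, $u' \circ u = t_K$; and a pushout $G_K \xrightarrow{g_R} G_R \xleftarrow{w} R$ of $u$ and $r$ (with the induced $w' : G_R \to R'$). ${\Rightarrow_\rho}$ is the relation $\{(G_L,G_R) \mid \exists m,\alpha.\ G_L \Rightarrow^{m,\alpha}_\rho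 G_R\}$; ${\Rightarrow^{\rightarrowtail}_\rho}$ is its restriction to steps with $m$ monic; ${\Rightarrow^{\mathrm{SM}}_\rho}$ is its restriction to steps where $L \xleftarrow{1_L} L \xrightarrow{m} G_L$ is a pullback of $t_L$ and $\alpha$ (strong match). A category is amendable if for every morphism $t_L : L \to L'$ there is a factorization $t_L = \beta \circ t_L'$ with $t_L' : L \rightarrowtail L''$ mono and $\beta : L'' \to L'$ such that for every factorization $t_L = \alpha \circ m$ with $m : L \rightarrowtail G_L$ mono and $\alpha : G_L \to L'$ there exists $\alpha' : G_L \to L''$ with $\alpha' \circ m = t_L'$ and $\beta \circ \alpha' = \alpha$. It is strongly amendable if moreover the factorization $(t_L',\beta)$ can be chosen so that in each case $L \xleftarrow{1_L} L \xrightarrow{m} G_L$ is a pullback of $t_L'$ and $\alpha'$. *)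

theory Defs
  imports Main
begin

text \<open>A category with object type 'o and arrow type 'a.  comp C g f is the
composite g after f (defined when dom g = cod f).\<close>

record ('o, 'a) cat =
  Obj  :: "'o set"
  Arr  :: "'a set"
  dom  :: "'a \<Rightarrow> 'o"
  cod  :: "'a \<Rightarrow> 'o"
  comp :: "'a \<Rightarrow> 'a \<Rightarrow> 'a"
  idm  :: "'o \<Rightarrow> 'a"

definition category :: "('o, 'a) cat \<Rightarrow> bool" where
  "category C \<longleftrightarrow>
     (\<forall>f\<in>Arr C. dom C f \<in> Obj C \<and> cod C f \<in> Obj C) \<and>
     (\<forall>X\<in>Obj C. idm C X \<in> Arr C \<and> dom C (idm C X) = X \<and> cod C (idm C X) = X) \<and>
     (\<forall>f\<in>Arr C. \<forall>g\<in>Arr C. dom C g = cod C f \<longrightarrow>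
        comp C g f \<in> Arr C \<and> dom C (comp C g f) = dom C f \<and> cod C (comp C g f) = cod C g) \<and>
     (\<forall>f\<in>Arr C. \<forall>g\<in>Arr C. \<forall>h\<in>Arr C. dom C g = cod C f \<longrightarrow> dom C h = cod C g \<longrightarrow>
        comp C h (comp C g f) = comp C (comp C h g) f) \<and>
     (\<forall>f\<in>Arr C. comp C f (idm C (dom C f)) = f \<and> comp C (idm C (cod C f)) f = f)"

definition hom :: "('o, 'a) cat \<Rightarrow> 'a \<Rightarrow> 'o \<Rightarrow> 'o \<Rightarrow> bool" where
  "hom C f X Y \<longleftrightarrow> f \<in> Arr C \<and> dom C f = X \<and> cod C f = Y"

definition mono :: "('o, 'a) cat \<Rightarrow> 'a \<Rightarrow> bool" where
  "mono C m \<longleftrightarrow> m \<in> Arr C \<and>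
     (\<forall>g h. g \<in> Arr C \<and> h \<in> Arr C \<and> dom C g = dom C h \<and> cod C g = dom C m \<and>
        cod C h = dom C m \<and> comp C m g = comp C m h \<longrightarrow> g = h)"

text \<open>is_pullback C f g p q: the span (p : P \<rightarrow> A, q : P \<rightarrow> B) is a pullback of the
cospan (f : A \<rightarrow> Z, g : B \<rightarrow> Z).\<close>

definition is_pullback :: "('o, 'a) cat \<Rightarrow> 'a \<Rightarrow> 'a \<Rightarrow> 'a \<Rightarrow> 'a \<Rightarrow> bool" where
  "is_pullback C f g p q \<longleftrightarrow>
     f \<in> Arr C \<and> g \<in> Arr C \<and> p \<in> Arr C \<and> q \<in> Arr C \<and>
     cod C f = cod C g \<and> dom C p = dom C q \<and> cod C p = dom C f \<and> cod C q = dom C g \<and>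
     comp C f p = comp C g q \<and>
     (\<forall>x y. x \<in> Arr C \<and> y \<in> Arr C \<and> dom C x = dom C y \<and> cod C x = dom C f \<and>
        cod C y = dom C g \<and> comp C f x = comp C g y \<longrightarrow>
        (\<exists>!u. u \<in> Arr C \<and> dom C u = dom C x \<and> cod C u = dom C p \<and>
              comp C p u = x \<and> comp C q u = y))"

text \<open>is_pushout C f g p q: the cospan (p : B \<rightarrow> P, q : D \<rightarrow> P) is a pushout of the
span (f : A \<rightarrow> B, g : A \<rightarrow> D).\<close>

definition is_pushout :: "('o, 'a) cat \<Rightarrow> 'a \<Rightarrow> 'a \<Rightarrow> 'a \<Rightarrow> 'a \<Rightarrow> bool" where
  "is_pushout C f g p q \<longleftrightarrow>
     f \<in> Arr C \<and> g \<in> Arr C \<and> p \<in> Arr C \<and> q \<in> Arr C \<and>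
     dom C f = dom C g \<and> cod C p = cod C q \<and> dom C p = cod C f \<and> dom C q = cod C g \<and>
     comp C p f = comp C q g \<and>
     (\<forall>x y. x \<in> Arr C \<and> y \<in> Arr C \<and> cod C x = cod C y \<and> dom C x = cod C f \<and>
        dom C y = cod C g \<and> comp C x f = comp C y g \<longrightarrow>
        (\<exists>!u. u \<in> Arr C \<and> dom C u = cod C p \<and> cod C u = cod C x \<and>
              comp C u p = x \<and> comp C u q = y))"

definition has_pullbacks :: "('o, 'a) cat \<Rightarrow> bool" where
  "has_pullbacks C \<longleftrightarrow> (\<forall>f\<in>Arr C. \<forall>g\<in>Arr C. cod C f = cod C g \<longrightarrow>
      (\<exists>p q. is_pullback C f g p q))"

definition has_pushouts :: "('o, 'a) cat \<Rightarrow> bool" where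
  "has_pushouts C \<longleftrightarrow> (\<forall>f\<in>Arr C. \<forall>g\<in>Arr C. dom C f = dom C g \<longrightarrow>
      (\<exists>p q. is_pushout C f g p q))"

text \<open>A rule is given by its seven morphisms; the objects are
L = cod l, K = dom l, R = cod r, L' = cod tL, K' = dom l', R' = cod r'.\<close>

record 'a pbpo_rule =
  r_l  :: 'a
  r_r  :: 'a
  r_tL :: 'a
  r_tK :: 'a
  r_tR :: 'a
  r_l' :: 'a
  r_r' :: 'a

definition pbpo_rule :: "('o, 'a) cat \<Rightarrow> 'a pbpo_rule \<Rightarrow> bool" where
  "pbpo_rule C \<rho> \<longleftrightarrow>
     (let L = cod C (r_l \<rho>); K = dom C (r_l \<rho>); R = cod C (r_r \<rho>);
          L' = cod C (r_tL \<rho>); K' = dom C (r_l' \<rho>); R' = cod C (r_r' \<rho>) in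
      hom C (r_l \<rho>) K L \<and> hom C (r_r \<rho>) K R \<and>
      hom C (r_tL \<rho>) L L' \<and> hom C (r_tK \<rho>) K K' \<and> hom C (r_tR \<rho>) R R' \<and>
      hom C (r_l' \<rho>) K' L' \<and> hom C (r_r' \<rho>) K' R' \<and>
      comp C (r_tL \<rho>) (r_l \<rho>) = comp C (r_l' \<rho>) (r_tK \<rho>) \<and>
      comp C (r_tR \<rho>) (r_r \<rho>) = comp C (r_r' \<rho>) (r_tK \<rho>))"

definition canonical_rule :: "('o, 'a) cat \<Rightarrow> 'a pbpo_rule \<Rightarrow> bool" where
  "canonical_rule C \<rho> \<longleftrightarrow> pbpo_rule C \<rho> \<and>
     is_pullback C (r_tL \<rho>) (r_l' \<rho>) (r_l \<rho>) (r_tK \<rho>) \<and>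
     is_pushout C (r_tK \<rho>) (r_r \<rho>) (r_r' \<rho>) (r_tR \<rho>)"

definition monic_rule :: "('o, 'a) cat \<Rightarrow> 'a pbpo_rule \<Rightarrow> bool" where
  "monic_rule C \<rho> \<longleftrightarrow> canonical_rule C \<rho> \<and> mono C (r_tL \<rho>)"

definition pbpo_step ::
  "('o, 'a) cat \<Rightarrow> 'a pbpo_rule \<Rightarrow> 'a \<Rightarrow> 'a \<Rightarrow> 'o \<Rightarrow> 'o \<Rightarrow> bool" where
  "pbpo_step C \<rho> m \<alpha> GL GR \<longleftrightarrow>
     pbpo_rule C \<rho> \<and>
     hom C m (cod C (r_l \<rho>)) GL \<and> hom C \<alpha> GL (cod C (r_tL \<rho>)) \<and>
     r_tL \<rho> = comp C \<alpha> m \<and>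
     (\<exists>gL u' u gR w.
        is_pullback C \<alpha> (r_l' \<rho>) gL u' \<and>
        hom C u (dom C (r_l \<rho>)) (dom C gL) \<and>
        comp C gL u = comp C m (r_l \<rho>) \<and> comp C u' u = r_tK \<rho> \<and>
        is_pushout C u (r_r \<rho>) gR w \<and> cod C gR = GR)"

definition strong_match :: "('o, 'a) cat \<Rightarrow> 'a pbpo_rule \<Rightarrow> 'a \<Rightarrow> 'a \<Rightarrow> bool" where
  "strong_match C \<rho> m \<alpha> \<longleftrightarrow>
     is_pullback C (r_tL \<rho>) \<alpha> (idm C (cod C (r_l \<rho>))) m"

definition pbpo_rel :: "('o, 'a) cat \<Rightarrow> 'a pbpo_rule \<Rightarrow> ('o \<times> 'o) set" where
  "pbpo_rel C \<rho> = {(GL, GR). \<exists>m \<alpha>. pbpo_step C \<rho> m \<alpha> GL GR}"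

definition pbpo_rel_mono :: "('o, 'a) cat \<Rightarrow> 'a pbpo_rule \<Rightarrow> ('o \<times> 'o) set" where
  "pbpo_rel_mono C \<rho> = {(GL, GR). \<exists>m \<alpha>. mono C m \<and> pbpo_step C \<rho> m \<alpha> GL GR}"

definition pbpo_rel_SM :: "('o, 'a) cat \<Rightarrow> 'a pbpo_rule \<Rightarrow> ('o \<times> 'o) set" where
  "pbpo_rel_SM C \<rho> = {(GL, GR). \<exists>m \<alpha>. strong_match C \<rho> m \<alpha> \<and> pbpo_step C \<rho> m \<alpha> GL GR}"

definition amendable :: "('o, 'a) cat \<Rightarrow> bool" where
  "amendable C \<longleftrightarrow>
     (\<forall>tL\<in>Arr C. \<exists>tL'' \<beta>.
        mono C tL'' \<and> hom C \<beta> (cod C tL'') (cod C tL) \<and> dom C tL'' = dom C tL \<and>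
        tL = comp C \<beta> tL'' \<and>
        (\<forall>m \<alpha>. mono C m \<and> dom C m = dom C tL \<and> hom C \<alpha> (cod C m) (cod C tL) \<and>
               tL = comp C \<alpha> m \<longrightarrow>
           (\<exists>\<alpha>'. hom C \<alpha>' (cod C m) (cod C tL'') \<and>
                 comp C \<alpha>' m = tL'' \<and> comp C \<beta> \<alpha>' = \<alpha>)))"

definition strongly_amendable :: "('o, 'a) cat \<Rightarrow> bool" where
  "strongly_amendable C \<longleftrightarrow>
     (\<forall>tL\<in>Arr C. \<exists>tL'' \<beta>.
        mono C tL'' \<and> hom C \<beta> (cod C tL'') (cod C tL) \<and> dom C tL'' = dom C tL \<and>
        tL = comp C \<beta> tL'' \<and>
        (\<forall>m \<alpha>. mono C m \<and> dom C m = dom C tL \<and> hom C \<alpha> (cod C m) (cod C tL) \<and>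
               tL = comp C \<alpha> m \<longrightarrow>
           (\<exists>\<alpha>'. hom C \<alpha>' (cod C m) (cod C tL'') \<and>
                 comp C \<alpha>' m = tL'' \<and> comp C \<beta> \<alpha>' = \<alpha> \<and>
                 is_pullback C tL'' \<alpha>' (idm C (dom C tL)) m)))"

end

(*
  Amendability factors t_L = beta o t_L'' with t_L'' monic such that every monic match
  (m, alpha) of rho factors as alpha = beta o alpha' with alpha' o m = t_L''.  Pulling the
  context l' : K' -> L' of rho back along beta gives a monic rule sigma with type morphism
  t_L''.  By pullback pasting, the pullback of alpha along l' is the composite of the pullback
  of alpha' along the new context with the pullback square defining it, so a step of rho at
  (m, beta o alpha') is the same as a step of sigma at (m, alpha'), with the same pushout.
  Every sigma-match is monic because t_L'' = alpha' o m is, and every monic rho-match lifts to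
  sigma by amendability; under strong amendability the lift alpha' is a strong match.
*)

theory Submission
  imports Defs
begin

locale categorical =
  fixes C :: "('o, 'a) cat"
  assumes category: "category C"
begin

abbreviation comp_in :: "'a \<Rightarrow> 'a \<Rightarrow> 'a"  (infixr "\<cdot>" 55)
  where "g \<cdot> f \<equiv> comp C g f"

lemma comp_in_Arr [simp]:
  "f \<in> Arr C \<Longrightarrow> g \<in> Arr C \<Longrightarrow> dom C g = cod C f \<Longrightarrow> g \<cdot> f \<in> Arr C"
  and dom_comp [simp]:
  "f \<in> Arr C \<Longrightarrow> g \<in> Arr C \<Longrightarrow> dom C g = cod C f \<Longrightarrow> dom C (g \<cdot> f) = dom C f"
  and cod_comp [simp]:
  "f \<in> Arr C \<Longrightarrow> g \<in> Arr C \<Longrightarrow> dom C g = cod C f \<Longrightarrow> cod C (g \<cdot> f) = cod C g"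
  using category unfolding category_def by blast+

lemma comp_assoc:
  "f \<in> Arr C \<Longrightarrow> g \<in> Arr C \<Longrightarrow> h \<in> Arr C \<Longrightarrow> dom C g = cod C f \<Longrightarrow> dom C h = cod C g \<Longrightarrow>
   (h \<cdot> g) \<cdot> f = h \<cdot> g \<cdot> f"
  using category unfolding category_def by metis

lemma monoD:
  assumes "mono C m" "g \<in> Arr C" "h \<in> Arr C" "dom C g = dom C h" "cod C g = dom C m"
    "cod C h = dom C m" "m \<cdot> g = m \<cdot> h"
  shows "g = h"
  using assms unfolding mono_def by blast

lemma mono_of_comp:
  assumes am: "mono C (a \<cdot> m)" and "a \<in> Arr C" "m \<in> Arr C" "dom C a = cod C m"
  shows "mono C m"
  unfolding mono_def
proof (intro conjI allI impI)
  fix g h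
  assume gh: "g \<in> Arr C \<and> h \<in> Arr C \<and> dom C g = dom C h \<and> cod C g = dom C m \<and>
              cod C h = dom C m \<and> m \<cdot> g = m \<cdot> h"
  then have "(a \<cdot> m) \<cdot> g = (a \<cdot> m) \<cdot> h"
    using assms by (simp add: comp_assoc)
  then show "g = h"
    by (rule monoD[OF am, rotated -1]) (use gh assms in simp_all)
qed (use assms in simp)

lemma pullbackD:
  assumes "is_pullback C f g p q"
  shows "f \<in> Arr C" "g \<in> Arr C" "p \<in> Arr C" "q \<in> Arr C"
    "cod C f = cod C g" "dom C p = dom C q" "cod C p = dom C f" "cod C q = dom C g"
  using assms unfolding is_pullback_def by blast+

lemma pullback_commutes: "is_pullback C f g p q \<Longrightarrow> f \<cdot> p = g \<cdot> q"
  unfolding is_pullback_def by blast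

lemma pullback_commutes_comp:
  assumes "is_pullback C f g p q" "u \<in> Arr C" "cod C u = dom C p"
  shows "f \<cdot> p \<cdot> u = g \<cdot> q \<cdot> u"
  using assms pullbackD[OF assms(1)] by (simp add: pullback_commutes flip: comp_assoc)

lemma pullback_universal:
  assumes "is_pullback C f g p q" "x \<in> Arr C" "y \<in> Arr C" "dom C x = dom C y"
    "cod C x = dom C f" "cod C y = dom C g" "f \<cdot> x = g \<cdot> y"
  shows "\<exists>!u. u \<in> Arr C \<and> dom C u = dom C x \<and> cod C u = dom C p \<and> p \<cdot> u = x \<and> q \<cdot> u = y"
  using assms unfolding is_pullback_def by blast

lemma pullback_factor:
  assumes "is_pullback C f g p q" "x \<in> Arr C" "y \<in> Arr C" "dom C x = dom C y"
    "cod C x = dom C f" "cod C y = dom C g" "f \<cdot> x = g \<cdot> y"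
  obtains u where "u \<in> Arr C" "dom C u = dom C x" "cod C u = dom C p" "p \<cdot> u = x" "q \<cdot> u = y"
  using pullback_universal[OF assms] by blast

lemma pullback_arr_eqI:
  assumes pb: "is_pullback C f g p q"
    and "u \<in> Arr C" "v \<in> Arr C" "cod C u = dom C p" "cod C v = dom C p" "dom C u = dom C v"
    and "p \<cdot> u = p \<cdot> v" "q \<cdot> u = q \<cdot> v"
  shows "u = v"
proof -
  note pb' = pullbackD[OF pb]
  have "f \<cdot> p \<cdot> u = g \<cdot> q \<cdot> u"
    using pullback_commutes_comp[OF pb] assms by blast
  then have "\<exists>!w. w \<in> Arr C \<and> dom C w = dom C u \<and> cod C w = dom C p \<and>
                  p \<cdot> w = p \<cdot> u \<and> q \<cdot> w = q \<cdot> u"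
    using pullback_universal[OF pb, of "p \<cdot> u" "q \<cdot> u"] assms pb' by simp
  then show ?thesis
    using assms by metis
qed

lemma pullbackI:
  assumes "f \<in> Arr C" "g \<in> Arr C" "p \<in> Arr C" "q \<in> Arr C"
    "cod C f = cod C g" "dom C p = dom C q" "cod C p = dom C f" "cod C q = dom C g"
    "f \<cdot> p = g \<cdot> q"
  and factor: "\<And>x y. x \<in> Arr C \<Longrightarrow> y \<in> Arr C \<Longrightarrow> dom C x = dom C y \<Longrightarrow>
      cod C x = dom C f \<Longrightarrow> cod C y = dom C g \<Longrightarrow> f \<cdot> x = g \<cdot> y \<Longrightarrow>
      \<exists>u. u \<in> Arr C \<and> dom C u = dom C x \<and> cod C u = dom C p \<and> p \<cdot> u = x \<and> q \<cdot> u = y"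
  and jointly_monic: "\<And>u v. u \<in> Arr C \<Longrightarrow> v \<in> Arr C \<Longrightarrow> cod C u = dom C p \<Longrightarrow>
      cod C v = dom C p \<Longrightarrow> dom C u = dom C v \<Longrightarrow> p \<cdot> u = p \<cdot> v \<Longrightarrow> q \<cdot> u = q \<cdot> v \<Longrightarrow>
      u = v"
  shows "is_pullback C f g p q"
  unfolding is_pullback_def
proof (intro conjI allI impI)
  fix x y
  assume "x \<in> Arr C \<and> y \<in> Arr C \<and> dom C x = dom C y \<and> cod C x = dom C f \<and>
          cod C y = dom C g \<and> f \<cdot> x = g \<cdot> y"
  then obtain u where u: "u \<in> Arr C \<and> dom C u = dom C x \<and> cod C u = dom C p \<and> p \<cdot> u = x \<and> q \<cdot> u = y"
    using factor by blast
  then show "\<exists>!u. u \<in> Arr C \<and> dom C u = dom C x \<and> cod C u = dom C p \<and> p \<cdot> u = x \<and> q \<cdot> u = y"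
    using jointly_monic[of _ u] by (intro ex1I[of _ u]) auto
qed (fact assms)+

lemma pullback_compose:
  assumes L: "is_pullback C f h p q" and R: "is_pullback C g k h b"
  shows "is_pullback C (g \<cdot> f) k p (b \<cdot> q)"
proof -
  note L' = pullbackD[OF L] and R' = pullbackD[OF R]
  show ?thesis
  proof (rule pullbackI)
    have "(g \<cdot> f) \<cdot> p = (g \<cdot> h) \<cdot> q"
      using L' R' by (simp add: comp_assoc pullback_commutes[OF L])
    also have "\<dots> = (k \<cdot> b) \<cdot> q"
      by (simp add: pullback_commutes[OF R])
    also have "\<dots> = k \<cdot> b \<cdot> q"
      using L' R' by (simp add: comp_assoc)
    finally show "(g \<cdot> f) \<cdot> p = k \<cdot> b \<cdot> q" .
  next
    fix x y
    assume x: "x \<in> Arr C" "cod C x = dom C (g \<cdot> f)" and y: "y \<in> Arr C" "cod C y = dom C k"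
      and xy: "dom C x = dom C y" "(g \<cdot> f) \<cdot> x = k \<cdot> y"
    then have x': "cod C x = dom C f" "g \<cdot> f \<cdot> x = k \<cdot> y"
      using L' R' by (simp_all add: comp_assoc)
    then obtain v where v: "v \<in> Arr C" "dom C v = dom C x" "cod C v = dom C h" "h \<cdot> v = f \<cdot> x" "b \<cdot> v = y"
      using pullback_factor[OF R, of "f \<cdot> x" y] x y xy L' R' by auto
    then obtain u where "u \<in> Arr C" "dom C u = dom C x" "cod C u = dom C p" "p \<cdot> u = x" "q \<cdot> u = v"
      using pullback_factor[OF L, of x v] x x' L' by auto
    then show "\<exists>u. u \<in> Arr C \<and> dom C u = dom C x \<and> cod C u = dom C p \<and> p \<cdot> u = x \<and> (b \<cdot> q) \<cdot> u = y"
      using v L' R' by (auto simp: comp_assoc)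
  next
    fix u v
    assume uv: "u \<in> Arr C" "v \<in> Arr C" "cod C u = dom C p" "cod C v = dom C p" "dom C u = dom C v"
      and p: "p \<cdot> u = p \<cdot> v" and bq: "(b \<cdot> q) \<cdot> u = (b \<cdot> q) \<cdot> v"
    have "h \<cdot> q \<cdot> u = h \<cdot> q \<cdot> v"
      using uv p by (simp flip: pullback_commutes_comp[OF L])
    moreover have "b \<cdot> q \<cdot> u = b \<cdot> q \<cdot> v"
      using uv L' R' bq by (simp add: comp_assoc)
    ultimately have "q \<cdot> u = q \<cdot> v"
      using pullback_arr_eqI[OF R, of "q \<cdot> u" "q \<cdot> v"] uv L' by simp
    then show "u = v"
      using pullback_arr_eqI[OF L] uv p by simp
  qed (use L' R' in simp_all)
qed

lemma pullback_cancel: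
  assumes O: "is_pullback C (g \<cdot> f) k p (b \<cdot> q)" and R: "is_pullback C g k h b"
    and f: "f \<in> Arr C" "cod C f = dom C g" and q: "q \<in> Arr C" "cod C q = dom C h"
    and pq: "dom C p = dom C q" "f \<cdot> p = h \<cdot> q"
  shows "is_pullback C f h p q"
proof -
  note O' = pullbackD[OF O] and R' = pullbackD[OF R]
  have p: "p \<in> Arr C" "cod C p = dom C f"
    using O'(3,7) dom_comp[OF f(1) R'(1) f(2)[symmetric]] by simp_all
  show ?thesis
  proof (rule pullbackI)
    fix x y
    assume x: "x \<in> Arr C" "cod C x = dom C f" and y: "y \<in> Arr C" "cod C y = dom C h"
      and xy: "dom C x = dom C y" "f \<cdot> x = h \<cdot> y"
    have "(g \<cdot> f) \<cdot> x = k \<cdot> b \<cdot> y"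
      using x y f R' by (simp add: comp_assoc xy(2) flip: pullback_commutes_comp[OF R])
    then obtain u where u: "u \<in> Arr C" "dom C u = dom C x" "cod C u = dom C p" "p \<cdot> u = x"
        "(b \<cdot> q) \<cdot> u = b \<cdot> y"
      using pullback_factor[OF O, of x "b \<cdot> y"] x y xy f R' by auto
    have "q \<cdot> u = y"
    proof (rule pullback_arr_eqI[OF R])
      have "h \<cdot> q \<cdot> u = (h \<cdot> q) \<cdot> u"
        using u q pq R'(3) by (simp add: comp_assoc)
      also have "\<dots> = f \<cdot> p \<cdot> u"
        using u p f by (simp add: comp_assoc flip: pq(2))
      finally show "h \<cdot> q \<cdot> u = h \<cdot> y"
        using u xy(2) by simp
      show "b \<cdot> q \<cdot> u = b \<cdot> y"
        using u q pq R' by (simp add: comp_assoc)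
    qed (use u q pq y xy in simp_all)
    then show "\<exists>u. u \<in> Arr C \<and> dom C u = dom C x \<and> cod C u = dom C p \<and> p \<cdot> u = x \<and> q \<cdot> u = y"
      using u by blast
  next
    fix u v
    assume uv: "u \<in> Arr C" "v \<in> Arr C" "cod C u = dom C p" "cod C v = dom C p" "dom C u = dom C v"
      and eq: "p \<cdot> u = p \<cdot> v" "q \<cdot> u = q \<cdot> v"
    have "(b \<cdot> q) \<cdot> u = (b \<cdot> q) \<cdot> v"
      using uv q pq R' eq(2) by (simp add: comp_assoc)
    then show "u = v"
      by (rule pullback_arr_eqI[OF O, rotated -1]) (use uv eq in simp_all)
  qed (use f q p pq R'(3,7) in simp_all)
qed

lemma pushoutD:
  assumes "is_pushout C f g p q"
  shows "f \<in> Arr C" "g \<in> Arr C" "p \<in> Arr C" "q \<in> Arr C"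
    "dom C f = dom C g" "cod C p = cod C q" "dom C p = cod C f" "dom C q = cod C g"
    "p \<cdot> f = q \<cdot> g"
  using assms unfolding is_pushout_def by blast+

lemma pbpo_ruleD:
  assumes "pbpo_rule C \<rho>"
  shows "r_l \<rho> \<in> Arr C" "r_r \<rho> \<in> Arr C" "dom C (r_r \<rho>) = dom C (r_l \<rho>)"
    "r_tL \<rho> \<in> Arr C" "dom C (r_tL \<rho>) = cod C (r_l \<rho>)"
    "r_tK \<rho> \<in> Arr C" "dom C (r_tK \<rho>) = dom C (r_l \<rho>)" "cod C (r_tK \<rho>) = dom C (r_l' \<rho>)"
    "r_l' \<rho> \<in> Arr C" "cod C (r_l' \<rho>) = cod C (r_tL \<rho>)"
  using assms unfolding pbpo_rule_def Let_def hom_def by auto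

lemma pbpo_rule_commutes:
  "pbpo_rule C \<rho> \<Longrightarrow> r_tL \<rho> \<cdot> r_l \<rho> = r_l' \<rho> \<cdot> r_tK \<rho>"
  unfolding pbpo_rule_def Let_def by simp

lemma pbpo_stepI:
  assumes "pbpo_rule C \<rho>" "hom C m (cod C (r_l \<rho>)) GL" "hom C \<alpha> GL (cod C (r_tL \<rho>))"
    "r_tL \<rho> = \<alpha> \<cdot> m" "is_pullback C \<alpha> (r_l' \<rho>) gL u'" "hom C u (dom C (r_l \<rho>)) (dom C gL)"
    "gL \<cdot> u = m \<cdot> r_l \<rho>" "u' \<cdot> u = r_tK \<rho>" "is_pushout C u (r_r \<rho>) gR w" "cod C gR = GR"
  shows "pbpo_step C \<rho> m \<alpha> GL GR"
  unfolding pbpo_step_def using assms by blast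

lemma pbpo_stepE:
  assumes "pbpo_step C \<rho> m \<alpha> GL GR"
  obtains gL u' u gR w where "pbpo_rule C \<rho>" "hom C m (cod C (r_l \<rho>)) GL"
    "hom C \<alpha> GL (cod C (r_tL \<rho>))" "r_tL \<rho> = \<alpha> \<cdot> m" "is_pullback C \<alpha> (r_l' \<rho>) gL u'"
    "hom C u (dom C (r_l \<rho>)) (dom C gL)" "gL \<cdot> u = m \<cdot> r_l \<rho>" "u' \<cdot> u = r_tK \<rho>"
    "is_pushout C u (r_r \<rho>) gR w" "cod C gR = GR"
  using assms unfolding pbpo_step_def by blast

end

definition restriction_along ::
  "('o, 'a) cat \<Rightarrow> 'a \<Rightarrow> 'a \<Rightarrow> 'a pbpo_rule \<Rightarrow> 'a pbpo_rule \<Rightarrow> bool" where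
  "restriction_along C \<beta> b \<rho> \<sigma> \<longleftrightarrow>
     canonical_rule C \<sigma> \<and> r_l \<sigma> = r_l \<rho> \<and> r_r \<sigma> = r_r \<rho> \<and>
     r_tL \<rho> = comp C \<beta> (r_tL \<sigma>) \<and> comp C b (r_tK \<sigma>) = r_tK \<rho> \<and>
     is_pullback C \<beta> (r_l' \<rho>) (r_l' \<sigma>) b"

context categorical
begin

lemma restriction_alongD:
  assumes "restriction_along C \<beta> b \<rho> \<sigma>"
  shows "canonical_rule C \<sigma>" "r_l \<sigma> = r_l \<rho>" "r_r \<sigma> = r_r \<rho>" "r_tL \<rho> = \<beta> \<cdot> r_tL \<sigma>"
    "b \<cdot> r_tK \<sigma> = r_tK \<rho>" "is_pullback C \<beta> (r_l' \<rho>) (r_l' \<sigma>) b"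
  using assms unfolding restriction_along_def by simp_all

lemma restriction_along_exists:
  assumes pullbacks: "has_pullbacks C" and pushouts: "has_pushouts C"
    and \<rho>: "canonical_rule C \<rho>" and t: "t \<in> Arr C" "dom C t = dom C (r_tL \<rho>)"
    and \<beta>: "hom C \<beta> (cod C t) (cod C (r_tL \<rho>))" and factor: "r_tL \<rho> = \<beta> \<cdot> t"
  obtains \<sigma> b where "restriction_along C \<beta> b \<rho> \<sigma>" "r_tL \<sigma> = t"
proof -
  have rule: "pbpo_rule C \<rho>" and pbL: "is_pullback C (r_tL \<rho>) (r_l' \<rho>) (r_l \<rho>) (r_tK \<rho>)"
    using \<rho> unfolding canonical_rule_def by blast+
  note \<rho>' = pbpo_ruleD[OF rule]
  have t': "t \<in> Arr C" "dom C t = cod C (r_l \<rho>)"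
    using t \<rho>'(5) by simp_all
  have \<beta>': "\<beta> \<in> Arr C" "dom C \<beta> = cod C t" "cod C \<beta> = cod C (r_l' \<rho>)"
    using \<beta> \<rho>'(10) unfolding hom_def by simp_all
  obtain l'' b where pbB: "is_pullback C \<beta> (r_l' \<rho>) l'' b"
    using pullbacks[unfolded has_pullbacks_def, rule_format, OF \<beta>'(1) \<rho>'(9)] \<beta>'(3) by blast
  note B = pullbackD[OF pbB]
  have "\<beta> \<cdot> t \<cdot> r_l \<rho> = r_l' \<rho> \<cdot> r_tK \<rho>"
    using t' \<beta>' \<rho>' by (simp flip: comp_assoc factor pbpo_rule_commutes[OF rule])
  then obtain tK'' where tK'': "tK'' \<in> Arr C" "dom C tK'' = dom C (r_l \<rho>)" "cod C tK'' = dom C l''"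
      "l'' \<cdot> tK'' = t \<cdot> r_l \<rho>" "b \<cdot> tK'' = r_tK \<rho>"
    using pullback_factor[OF pbB, of "t \<cdot> r_l \<rho>" "r_tK \<rho>"] t' \<beta>' \<rho>' B by auto
  obtain r'' tR'' where poS: "is_pushout C tK'' (r_r \<rho>) r'' tR''"
    using pushouts[unfolded has_pushouts_def, rule_format, OF tK''(1) \<rho>'(2)] tK''(2) \<rho>'(3)
    by auto
  note P = pushoutD[OF poS]
  define \<sigma> where "\<sigma> = \<lparr>r_l = r_l \<rho>, r_r = r_r \<rho>, r_tL = t, r_tK = tK'', r_tR = tR'', r_l' = l'', r_r' = r''\<rparr>"
  have pbS: "is_pullback C t l'' (r_l \<rho>) tK''"
  proof (rule pullback_cancel[OF _ pbB])
    show "is_pullback C (\<beta> \<cdot> t) (r_l' \<rho>) (r_l \<rho>) (b \<cdot> tK'')"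
      using pbL by (simp add: factor tK'')
  qed (use t' \<beta>' tK'' B \<rho>' in simp_all)
  have "pbpo_rule C \<sigma>"
    unfolding pbpo_rule_def Let_def hom_def \<sigma>_def using t' \<beta>' tK'' B P \<rho>' by simp
  then have "restriction_along C \<beta> b \<rho> \<sigma>"
    unfolding restriction_along_def canonical_rule_def using pbS poS pbB factor tK''
    by (simp add: \<sigma>_def)
  then show thesis
    using that by (simp add: \<sigma>_def)
qed

lemma restriction_step_imp_pbpo_step:
  assumes res: "restriction_along C \<beta> b \<rho> \<sigma>" and rule: "pbpo_rule C \<rho>"
    and step: "pbpo_step C \<sigma> m \<alpha> GL GR"
  shows "pbpo_step C \<rho> m (\<beta> \<cdot> \<alpha>) GL GR"
proof -
  note lr = restriction_alongD(2,3)[OF res] and tL = restriction_alongD(4)[OF res]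
    and tK = restriction_alongD(5)[OF res] and pbB = restriction_alongD(6)[OF res]
  have "pbpo_rule C \<sigma>"
    using restriction_alongD(1)[OF res] unfolding canonical_rule_def by blast
  note \<sigma>' = pbpo_ruleD[OF this]
  obtain gL u2 u gR w where m: "hom C m (cod C (r_l \<sigma>)) GL" and \<alpha>: "hom C \<alpha> GL (cod C (r_tL \<sigma>))"
    and \<alpha>m: "r_tL \<sigma> = \<alpha> \<cdot> m" and pbA: "is_pullback C \<alpha> (r_l' \<sigma>) gL u2"
    and u: "hom C u (dom C (r_l \<sigma>)) (dom C gL)" and gL_u: "gL \<cdot> u = m \<cdot> r_l \<sigma>"
    and u2_u: "u2 \<cdot> u = r_tK \<sigma>" and po: "is_pushout C u (r_r \<sigma>) gR w" "cod C gR = GR"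
    using step by (rule pbpo_stepE)
  note A = pullbackD[OF pbA] and B = pullbackD[OF pbB]
  show ?thesis
  proof (rule pbpo_stepI[where gL = gL and u' = "b \<cdot> u2" and u = u and gR = gR and w = w])
    show "is_pullback C (\<beta> \<cdot> \<alpha>) (r_l' \<rho>) gL (b \<cdot> u2)"
      by (rule pullback_compose[OF pbA pbB])
    show "(b \<cdot> u2) \<cdot> u = r_tK \<rho>"
      using u A B by (simp add: hom_def comp_assoc u2_u tK)
    show "r_tL \<rho> = (\<beta> \<cdot> \<alpha>) \<cdot> m"
      using m \<alpha> A B by (simp add: hom_def comp_assoc tL \<alpha>m)
    show "hom C (\<beta> \<cdot> \<alpha>) GL (cod C (r_tL \<rho>))"
      using \<alpha> A B \<sigma>' by (simp add: hom_def tL)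
  qed (use rule m u gL_u po lr in simp_all)
qed

lemma pbpo_step_imp_restriction_step:
  assumes res: "restriction_along C \<beta> b \<rho> \<sigma>" and step: "pbpo_step C \<rho> m \<alpha> GL GR"
    and \<alpha>': "hom C \<alpha>' GL (cod C (r_tL \<sigma>))" and \<alpha>'m: "\<alpha>' \<cdot> m = r_tL \<sigma>" and \<beta>\<alpha>': "\<beta> \<cdot> \<alpha>' = \<alpha>"
  shows "pbpo_step C \<sigma> m \<alpha>' GL GR"
proof -
  note lr = restriction_alongD(2,3)[OF res]
    and tK = restriction_alongD(5)[OF res] and pbB = restriction_alongD(6)[OF res]
  have rule: "pbpo_rule C \<sigma>"
    using restriction_alongD(1)[OF res] unfolding canonical_rule_def by blast
  note \<sigma>' = pbpo_ruleD[OF rule] and B = pullbackD[OF pbB]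
  obtain gL u' u gR w where m: "hom C m (cod C (r_l \<rho>)) GL" and \<alpha>: "hom C \<alpha> GL (cod C (r_tL \<rho>))"
    and pbA: "is_pullback C \<alpha> (r_l' \<rho>) gL u'"
    and u: "hom C u (dom C (r_l \<rho>)) (dom C gL)" and gL_u: "gL \<cdot> u = m \<cdot> r_l \<rho>"
    and u'_u: "u' \<cdot> u = r_tK \<rho>" and po: "is_pushout C u (r_r \<rho>) gR w" "cod C gR = GR"
    using step by (rule pbpo_stepE)
  note A = pullbackD[OF pbA]
  have a': "\<alpha>' \<in> Arr C" "dom C \<alpha>' = GL" "cod C \<alpha>' = dom C \<beta>"
    using \<alpha>' \<sigma>' B unfolding hom_def by simp_all
  have "\<beta> \<cdot> \<alpha>' \<cdot> gL = r_l' \<rho> \<cdot> u'"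
    using a' \<alpha> A B by (simp add: hom_def \<beta>\<alpha>' pullback_commutes[OF pbA] flip: comp_assoc)
  then obtain u2 where u2: "u2 \<in> Arr C" "dom C u2 = dom C gL" "cod C u2 = dom C (r_l' \<sigma>)"
      and l'_u2: "r_l' \<sigma> \<cdot> u2 = \<alpha>' \<cdot> gL" and b_u2: "b \<cdot> u2 = u'"
    using pullback_factor[OF pbB, of "\<alpha>' \<cdot> gL" u'] a' \<alpha> A B by (auto simp: hom_def)
  have pbS: "is_pullback C \<alpha>' (r_l' \<sigma>) gL u2"
  proof (rule pullback_cancel[OF _ pbB])
    show "is_pullback C (\<beta> \<cdot> \<alpha>') (r_l' \<rho>) gL (b \<cdot> u2)"
      using pbA by (simp add: \<beta>\<alpha>' b_u2)
  qed (use a' u2 A l'_u2 in simp_all)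
  have "u2 \<cdot> u = r_tK \<sigma>"
  proof (rule pullback_arr_eqI[OF pbB])
    have "r_l' \<sigma> \<cdot> u2 \<cdot> u = (\<alpha>' \<cdot> gL) \<cdot> u"
      using u u2 B by (simp add: hom_def comp_assoc flip: l'_u2)
    also have "\<dots> = (\<alpha>' \<cdot> m) \<cdot> r_l \<rho>"
      using u m a' \<alpha> A \<sigma>' lr by (simp add: hom_def comp_assoc gL_u)
    also have "\<dots> = r_l' \<sigma> \<cdot> r_tK \<sigma>"
      using \<alpha>'m lr(1) pbpo_rule_commutes[OF rule] by simp
    finally show "r_l' \<sigma> \<cdot> u2 \<cdot> u = r_l' \<sigma> \<cdot> r_tK \<sigma>" .
    show "b \<cdot> u2 \<cdot> u = b \<cdot> r_tK \<sigma>"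
      using u u2 B by (simp add: hom_def b_u2 u'_u tK flip: comp_assoc)
  qed (use u u2 \<sigma>' lr in \<open>simp_all add: hom_def\<close>)
  with rule m u gL_u pbS po \<alpha>' \<alpha>'m lr show ?thesis
    by (intro pbpo_stepI[where gL = gL and u' = u2 and u = u and gR = gR and w = w]) simp_all
qed

lemma pbpo_rel_restriction_subset_mono:
  assumes "restriction_along C \<beta> b \<rho> \<sigma>" "pbpo_rule C \<rho>" "mono C (r_tL \<sigma>)"
  shows "pbpo_rel C \<sigma> \<subseteq> pbpo_rel_mono C \<rho>"
proof safe
  fix GL GR
  assume "(GL, GR) \<in> pbpo_rel C \<sigma>"
  then obtain m \<alpha> where step: "pbpo_step C \<sigma> m \<alpha> GL GR"
    unfolding pbpo_rel_def by blast
  then have "hom C m (cod C (r_l \<sigma>)) GL" "hom C \<alpha> GL (cod C (r_tL \<sigma>))" "r_tL \<sigma> = \<alpha> \<cdot> m"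
    by (auto elim!: pbpo_stepE)
  then have "mono C m"
    using mono_of_comp[of \<alpha> m] assms(3) by (simp add: hom_def)
  with restriction_step_imp_pbpo_step[OF assms(1,2) step] show "(GL, GR) \<in> pbpo_rel_mono C \<rho>"
    unfolding pbpo_rel_mono_def by blast
qed

end

definition amending_factorization :: "('o, 'a) cat \<Rightarrow> 'a \<Rightarrow> 'a \<Rightarrow> 'a \<Rightarrow> bool" where
  "amending_factorization C tL t \<beta> \<longleftrightarrow>
     mono C t \<and> hom C \<beta> (cod C t) (cod C tL) \<and> dom C t = dom C tL \<and> tL = comp C \<beta> t \<and>
     (\<forall>m \<alpha>. mono C m \<and> dom C m = dom C tL \<and> hom C \<alpha> (cod C m) (cod C tL) \<and> tL = comp C \<alpha> m \<longrightarrow>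
        (\<exists>\<alpha>'. hom C \<alpha>' (cod C m) (cod C t) \<and> comp C \<alpha>' m = t \<and> comp C \<beta> \<alpha>' = \<alpha>))"

definition strongly_amending_factorization :: "('o, 'a) cat \<Rightarrow> 'a \<Rightarrow> 'a \<Rightarrow> 'a \<Rightarrow> bool" where
  "strongly_amending_factorization C tL t \<beta> \<longleftrightarrow>
     mono C t \<and> hom C \<beta> (cod C t) (cod C tL) \<and> dom C t = dom C tL \<and> tL = comp C \<beta> t \<and>
     (\<forall>m \<alpha>. mono C m \<and> dom C m = dom C tL \<and> hom C \<alpha> (cod C m) (cod C tL) \<and> tL = comp C \<alpha> m \<longrightarrow>
        (\<exists>\<alpha>'. hom C \<alpha>' (cod C m) (cod C t) \<and> comp C \<alpha>' m = t \<and> comp C \<beta> \<alpha>' = \<alpha> \<and>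
              is_pullback C t \<alpha>' (idm C (dom C tL)) m))"

lemma strongly_amending_factorization_imp_amending:
  "strongly_amending_factorization C tL t \<beta> \<Longrightarrow> amending_factorization C tL t \<beta>"
  unfolding strongly_amending_factorization_def amending_factorization_def by blast

lemma amendable_iff: "amendable C \<longleftrightarrow> (\<forall>tL\<in>Arr C. \<exists>t \<beta>. amending_factorization C tL t \<beta>)"
  unfolding amendable_def amending_factorization_def ..

lemma strongly_amendable_iff:
  "strongly_amendable C \<longleftrightarrow> (\<forall>tL\<in>Arr C. \<exists>t \<beta>. strongly_amending_factorization C tL t \<beta>)"
  unfolding strongly_amendable_def strongly_amending_factorization_def ..

context categorical
begin

lemma pbpo_rel_mono_subset_restriction:
  assumes res: "restriction_along C \<beta> b \<rho> \<sigma>"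
    and amend: "amending_factorization C (r_tL \<rho>) (r_tL \<sigma>) \<beta>"
  shows "pbpo_rel_mono C \<rho> \<subseteq> pbpo_rel C \<sigma>"
proof safe
  fix GL GR
  assume "(GL, GR) \<in> pbpo_rel_mono C \<rho>"
  then obtain m \<alpha> where "mono C m" and step: "pbpo_step C \<rho> m \<alpha> GL GR"
    unfolding pbpo_rel_mono_def by blast
  moreover from step have "hom C m (cod C (r_l \<rho>)) GL" "hom C \<alpha> GL (cod C (r_tL \<rho>))"
      "r_tL \<rho> = \<alpha> \<cdot> m" "dom C (r_tL \<rho>) = cod C (r_l \<rho>)"
    by (auto elim!: pbpo_stepE dest: pbpo_ruleD)
  ultimately obtain \<alpha>' where "hom C \<alpha>' GL (cod C (r_tL \<sigma>))" "\<alpha>' \<cdot> m = r_tL \<sigma>" "\<beta> \<cdot> \<alpha>' = \<alpha>"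
    using amend unfolding amending_factorization_def hom_def by force
  with pbpo_step_imp_restriction_step[OF res step] show "(GL, GR) \<in> pbpo_rel C \<sigma>"
    unfolding pbpo_rel_def by blast
qed

lemma pbpo_rel_mono_subset_restriction_SM:
  assumes res: "restriction_along C \<beta> b \<rho> \<sigma>"
    and amend: "strongly_amending_factorization C (r_tL \<rho>) (r_tL \<sigma>) \<beta>"
  shows "pbpo_rel_mono C \<rho> \<subseteq> pbpo_rel_SM C \<sigma>"
proof safe
  fix GL GR
  assume "(GL, GR) \<in> pbpo_rel_mono C \<rho>"
  then obtain m \<alpha> where "mono C m" and step: "pbpo_step C \<rho> m \<alpha> GL GR"
    unfolding pbpo_rel_mono_def by blast
  moreover from step have "hom C m (cod C (r_l \<rho>)) GL" "hom C \<alpha> GL (cod C (r_tL \<rho>))"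
      "r_tL \<rho> = \<alpha> \<cdot> m" "dom C (r_tL \<rho>) = cod C (r_l \<rho>)"
    by (auto elim!: pbpo_stepE dest: pbpo_ruleD)
  ultimately obtain \<alpha>' where "hom C \<alpha>' GL (cod C (r_tL \<sigma>))" "\<alpha>' \<cdot> m = r_tL \<sigma>" "\<beta> \<cdot> \<alpha>' = \<alpha>"
      and "is_pullback C (r_tL \<sigma>) \<alpha>' (idm C (cod C (r_l \<rho>))) m"
    using amend unfolding strongly_amending_factorization_def hom_def by force
  moreover note pbpo_step_imp_restriction_step[OF res step]
  ultimately show "(GL, GR) \<in> pbpo_rel_SM C \<sigma>"
    unfolding pbpo_rel_SM_def strong_match_def restriction_alongD(2)[OF res] by blast
qed

lemma monic_restriction_along_exists:
  assumes "has_pullbacks C" "has_pushouts C" "canonical_rule C \<rho>"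
    and "amending_factorization C (r_tL \<rho>) t \<beta>"
  obtains \<sigma> b where "restriction_along C \<beta> b \<rho> \<sigma>" "monic_rule C \<sigma>" "r_tL \<sigma> = t"
proof -
  have t: "mono C t" "dom C t = dom C (r_tL \<rho>)"
    and \<beta>: "hom C \<beta> (cod C t) (cod C (r_tL \<rho>))" "r_tL \<rho> = \<beta> \<cdot> t"
    using assms(4) unfolding amending_factorization_def by blast+
  then have "t \<in> Arr C"
    unfolding mono_def by blast
  then obtain \<sigma> b where "restriction_along C \<beta> b \<rho> \<sigma>" "r_tL \<sigma> = t"
    using restriction_along_exists[OF assms(1-3) _ t(2) \<beta>] by blast
  with t(1) show thesis
    using that restriction_alongD(1) unfolding monic_rule_def by blast
qed

lemma monic_rule_realizing_pbpo_rel_mono: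
  assumes "has_pullbacks C" "has_pushouts C" and \<rho>: "canonical_rule C \<rho>"
    and F: "amending_factorization C (r_tL \<rho>) t \<beta>"
  shows "\<exists>\<sigma>. monic_rule C \<sigma> \<and> pbpo_rel_mono C \<rho> = pbpo_rel C \<sigma>"
proof -
  obtain \<sigma> b where res: "restriction_along C \<beta> b \<rho> \<sigma>" and "monic_rule C \<sigma>" "r_tL \<sigma> = t"
    using monic_restriction_along_exists[OF assms] .
  moreover have "pbpo_rule C \<rho>"
    using \<rho> unfolding canonical_rule_def by blast
  ultimately show ?thesis
    using F pbpo_rel_mono_subset_restriction[OF res] pbpo_rel_restriction_subset_mono[OF res]
    unfolding monic_rule_def by blast
qed

lemma monic_rule_realizing_pbpo_rel_mono_SM:
  assumes "has_pullbacks C" "has_pushouts C" and \<rho>: "canonical_rule C \<rho>"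
    and F: "strongly_amending_factorization C (r_tL \<rho>) t \<beta>"
  shows "\<exists>\<sigma>. monic_rule C \<sigma> \<and> pbpo_rel_mono C \<rho> = pbpo_rel C \<sigma> \<and>
             pbpo_rel_mono C \<rho> = pbpo_rel_SM C \<sigma>"
proof -
  obtain \<sigma> b where res: "restriction_along C \<beta> b \<rho> \<sigma>" and "monic_rule C \<sigma>" "r_tL \<sigma> = t"
    using monic_restriction_along_exists[OF assms(1-3) strongly_amending_factorization_imp_amending[OF F]] .
  moreover have "pbpo_rule C \<rho>"
    using \<rho> unfolding canonical_rule_def by blast
  moreover have "pbpo_rel_SM C \<sigma> \<subseteq> pbpo_rel C \<sigma>"
    unfolding pbpo_rel_SM_def pbpo_rel_def by blast
  ultimately show ?thesis
    using F pbpo_rel_mono_subset_restriction_SM[OF res] pbpo_rel_restriction_subset_mono[OF res]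
    unfolding monic_rule_def by blast
qed

end

theorem lemma5:
  fixes C :: "('o, 'a) cat"
  assumes "category C" and "has_pullbacks C" and "has_pushouts C"
    and "amendable C"
  shows "(\<forall>\<rho>. canonical_rule C \<rho> \<longrightarrow>
            (\<exists>\<sigma>. monic_rule C \<sigma> \<and> pbpo_rel_mono C \<rho> = pbpo_rel C \<sigma>))
       \<and> (strongly_amendable C \<longrightarrow>
            (\<forall>\<rho>. canonical_rule C \<rho> \<longrightarrow>
              (\<exists>\<sigma>. monic_rule C \<sigma> \<and> pbpo_rel_mono C \<rho> = pbpo_rel C \<sigma> \<and>
                    pbpo_rel_mono C \<rho> = pbpo_rel_SM C \<sigma>)))"
proof -
  interpret categorical C
    by (rule categorical.intro) fact
  have tL: "r_tL \<rho> \<in> Arr C" if "canonical_rule C \<rho>" for \<rho>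
    using that pbpo_ruleD(4) unfolding canonical_rule_def by blast
  show ?thesis
  proof (intro conjI allI impI)
    fix \<rho> assume \<rho>: "canonical_rule C \<rho>"
    then obtain t \<beta> where "amending_factorization C (r_tL \<rho>) t \<beta>"
      using assms(4) tL unfolding amendable_iff by blast
    then show "\<exists>\<sigma>. monic_rule C \<sigma> \<and> pbpo_rel_mono C \<rho> = pbpo_rel C \<sigma>"
      by (rule monic_rule_realizing_pbpo_rel_mono[OF assms(2,3) \<rho>])
  next
    fix \<rho> assume "strongly_amendable C" and \<rho>: "canonical_rule C \<rho>"
    then obtain t \<beta> where "strongly_amending_factorization C (r_tL \<rho>) t \<beta>"
      using tL unfolding strongly_amendable_iff by blast
    then show "\<exists>\<sigma>. monic_rule C \<sigma> \<and> pbpo_rel_mono C \<rho> = pbpo_rel C \<sigma> \<and>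
                     pbpo_rel_mono C \<rho> = pbpo_rel_SM C \<sigma>"
      by (rule monic_rule_realizing_pbpo_rel_mono_SM[OF assms(2,3) \<rho>])
  qed
qed

end
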